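(* Let $A\in P(n)$ and $B\in P(m)$, and let $A\otimes B\in P(nm)$ be the Kronecker product, i.e. the block matrix whose $(i,j)$ block is $A_{ij}B$. Then $I(A\otimes B)=I(A)\,I(B)$.
   Context: $P(k)$ denotes the positive semidefinite complex $k\times k$ matrices. For $C\in P(k)$, let $P_k$ be the $k\times k$ matrix with all entries equal to $1$; the minimal index is $I(C)=\max\{\lambda\ge 0: C-\lambda P_k\ge 0\}$. *)

theory Defs
  imports "HOL-Analysis.Analysis"
begin

text \<open>Square complex matrices indexed by a finite type 'n (so k = CARD('n)).\<close>

definition hermitian :: "complex^'n^'n \<Rightarrow> bool" where
  "hermitian C \<longleftrightarrow> (\<forall>i j. C$i$j = cnj (C$j$i))"

definition qform :: "complex^'n^'n \<Rightarrow> complex^'n \<Rightarrow> complex" where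
  "qform C x = (\<Sum>i\<in>UNIV. \<Sum>j\<in>UNIV. cnj (x$i) * C$i$j * x$j)"

definition psd :: "complex^'n^'n \<Rightarrow> bool" where
  "psd C \<longleftrightarrow> hermitian C \<and> (\<forall>x. Im (qform C x) = 0 \<and> Re (qform C x) \<ge> 0)"

definition ones_mat :: "complex^'n^'n" where
  "ones_mat = (\<chi> i j. 1)"

definition min_index :: "complex^'n^'n \<Rightarrow> real" where
  "min_index C = Sup {t::real. t \<ge> 0 \<and> psd (C - t *\<^sub>R ones_mat)}"

definition kron :: "complex^'n^'n \<Rightarrow> complex^'m^'m \<Rightarrow> complex^('n \<times> 'm)^('n \<times> 'm)" where
  "kron A B = (\<chi> p q. A$(fst p)$(fst q) * B$(snd p)$(snd q))"

end

theory Submission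
  imports Defs
begin

(* Write a = I(A), b = I(B) and P for the all-ones matrices.  The entrywise identity
     kron A B - a b P = kron (A - a P) B + a kron P (B - b P)
   and the fact that Kronecker products of psd matrices are psd give I(kron A B) >= a b.
   Conversely, the quadratic form of kron A B - I(kron A B) P at a product vector
   x (x) y gives I(kron A B) |sum x|^2 |sum y|^2 <= (x* A x) (y* B y); maximality of a,
   applied for each fixed y, and then of b yields I(kron A B) <= a b.
   That kron A B is psd follows by writing B as a sum of rank-one psd matrices, obtained by
   repeatedly subtracting the rank-one matrix that clears one row (a Schur complement step). *)

(* Oriented form of hermitian_def, whose equation C$i$j = cnj (C$j$i) makes the simplifier loop. *)
lemma hermitian_iff_cnj: "hermitian C \<longleftrightarrow> (\<forall>i j. cnj (C$i$j) = C$j$i)"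
  unfolding hermitian_def by (metis complex_cnj_cnj)

lemma hermitian_cnj: "hermitian C \<Longrightarrow> cnj (C$i$j) = C$j$i"
  by (simp add: hermitian_iff_cnj)

lemma hermitian_add: "hermitian C \<Longrightarrow> hermitian D \<Longrightarrow> hermitian (C + D)"
  by (simp add: hermitian_iff_cnj)

lemma hermitian_diff: "hermitian C \<Longrightarrow> hermitian D \<Longrightarrow> hermitian (C - D)"
  by (simp add: hermitian_iff_cnj)

lemma hermitian_scaleR: "hermitian C \<Longrightarrow> hermitian (t *\<^sub>R C)"
  unfolding hermitian_iff_cnj vector_scaleR_component by (simp add: scaleR_conv_of_real)

lemma qform_add: "qform (C + D) x = qform C x + qform D x"
  by (simp add: qform_def sum.distrib algebra_simps)

lemma qform_diff: "qform (C - D) x = qform C x - qform D x"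
  by (simp add: qform_def sum_subtractf algebra_simps)

lemma qform_scaleR: "qform (t *\<^sub>R C) x = of_real t * qform C x"
  unfolding qform_def vector_scaleR_component
  by (simp add: scaleR_conv_of_real sum_distrib_left algebra_simps)

lemma qform_sum: "qform (\<Sum>r\<in>S. C r) x = (\<Sum>r\<in>S. qform (C r) x)"
  by (induction S rule: infinite_finite_induct) (simp_all add: qform_add, simp_all add: qform_def)

lemma psd_qform_real: "psd C \<Longrightarrow> qform C x = of_real (Re (qform C x))"
  by (simp add: psd_def complex_eq_iff)

lemma psd_Im_qform: "psd C \<Longrightarrow> Im (qform C x) = 0"
  by (simp add: psd_def)

lemma psd_qform_nonneg: "psd C \<Longrightarrow> 0 \<le> Re (qform C x)"
  by (simp add: psd_def)

lemma psd_add: "psd C \<Longrightarrow> psd D \<Longrightarrow> psd (C + D)"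
  by (simp add: psd_def hermitian_add qform_add)

lemma psd_scaleR: "0 \<le> t \<Longrightarrow> psd C \<Longrightarrow> psd (t *\<^sub>R C)"
  by (simp add: psd_def hermitian_scaleR qform_scaleR)

lemma qform_add_vec:
  "qform C (x + y) = qform C x + (\<Sum>i\<in>UNIV. \<Sum>j\<in>UNIV. cnj (x$i) * C$i$j * y$j)
     + (\<Sum>i\<in>UNIV. \<Sum>j\<in>UNIV. cnj (y$i) * C$i$j * x$j) + qform C y"
  unfolding qform_def by (simp add: sum.distrib algebra_simps)

lemma sum_times_axis: "(\<Sum>j\<in>UNIV. f j * axis p c $ j) = f p * (c::complex)"
  by (simp add: axis_def if_distrib if_distribR cong: if_cong)

lemma sum_cnj_axis_times: "(\<Sum>i\<in>UNIV. cnj (axis p c $ i) * f i) = cnj c * f p"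
  by (simp add: axis_def if_distrib if_distribR cong: if_cong)

lemma qform_axis: "qform C (axis p c) = cnj c * C$p$p * c"
  unfolding qform_def sum_times_axis unfolding mult.assoc sum_cnj_axis_times ..

lemma qform_add_axis:
  assumes "hermitian C"
  shows "qform C (x + axis p c) = qform C x + cnj c * (\<Sum>j\<in>UNIV. C$p$j * x$j)
     + c * cnj (\<Sum>j\<in>UNIV. C$p$j * x$j) + cnj c * C$p$p * c"
proof -
  have "(\<Sum>i\<in>UNIV. \<Sum>j\<in>UNIV. cnj (x$i) * C$i$j * axis p c $ j)
      = (\<Sum>i\<in>UNIV. cnj (x$i) * C$i$p) * c"
    unfolding sum_times_axis by (simp add: sum_distrib_right)
  also have "(\<Sum>i\<in>UNIV. cnj (x$i) * C$i$p) = cnj (\<Sum>j\<in>UNIV. C$p$j * x$j)"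
    using assms by (simp add: hermitian_cnj mult.commute)
  finally have xy: "(\<Sum>i\<in>UNIV. \<Sum>j\<in>UNIV. cnj (x$i) * C$i$j * axis p c $ j)
      = c * cnj (\<Sum>j\<in>UNIV. C$p$j * x$j)"
    by (simp only: mult.commute)
  have yx: "(\<Sum>i\<in>UNIV. \<Sum>j\<in>UNIV. cnj (axis p c $ i) * C$i$j * x$j)
      = cnj c * (\<Sum>j\<in>UNIV. C$p$j * x$j)"
    unfolding mult.assoc sum_distrib_left[symmetric] sum_cnj_axis_times ..
  show ?thesis
    unfolding qform_add_vec xy yx qform_axis by (simp add: algebra_simps)
qed

definition rank_one :: "complex^'n \<Rightarrow> complex^'n^'n" where
  "rank_one v = (\<chi> i j. v$i * cnj (v$j))"

lemma qform_rank_one: "qform (rank_one v) x = of_real ((cmod (\<Sum>i\<in>UNIV. cnj (v$i) * x$i))\<^sup>2)"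
proof -
  let ?z = "\<Sum>i\<in>UNIV. cnj (v$i) * x$i"
  have "qform (rank_one v) x = (\<Sum>i\<in>UNIV. \<Sum>j\<in>UNIV. cnj (x$i) * v$i * (cnj (v$j) * x$j))"
    unfolding qform_def rank_one_def by (simp add: mult.assoc)
  also have "\<dots> = (\<Sum>i\<in>UNIV. cnj (x$i) * v$i) * ?z"
    by (rule sum_product[symmetric])
  also have "\<dots> = cnj ?z * ?z"
    by (simp add: mult.commute)
  also have "\<dots> = of_real ((cmod ?z)\<^sup>2)"
    by (subst complex_norm_square) (rule mult.commute)
  finally show ?thesis .
qed

lemma psd_rank_one: "psd (rank_one v)"
  unfolding psd_def qform_rank_one by (simp add: hermitian_iff_cnj rank_one_def)

lemma rank_one_0 [simp]: "rank_one 0 = 0"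
  by (simp add: rank_one_def vec_eq_iff)

lemma psd_diag_zero_imp_row_zero:
  assumes "psd C" "C$p$p = 0"
  shows "C$p$j = 0"
proof (rule ccontr)
  assume nz: "C$p$j \<noteq> 0"
  define t where "t = (Re (C$j$j) + 1) / (2 * (cmod (C$p$j))\<^sup>2)"
  define y where "y = axis j 1 + axis p (- of_real t * C$p$j)"
  have herm: "hermitian C" using assms(1) by (simp add: psd_def)
  have "qform C y = C$j$j - of_real t * (2 * (C$p$j * cnj (C$p$j)))"
    unfolding y_def qform_add_axis[OF herm] qform_axis sum_times_axis
    using assms(2) by (simp add: algebra_simps)
  also have "\<dots> = C$j$j - of_real t * (2 * of_real ((cmod (C$p$j))\<^sup>2))"
    by (simp only: complex_norm_square)
  finally have "Re (qform C y) = Re (C$j$j) - 2 * t * (cmod (C$p$j))\<^sup>2"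
    by simp
  moreover have "2 * t * (cmod (C$p$j))\<^sup>2 = Re (C$j$j) + 1"
    using nz by (simp add: t_def)
  ultimately show False
    using psd_qform_nonneg[OF assms(1), of y] by linarith
qed

(* If C$p$p > 0 take v = C e_p / sqrt (C$p$p) (a Schur complement step): the form of C - v v*
   at x is the form of C at x - (u / C$p$p) e_p, where u = (C x)$p. *)
lemma psd_clear_row_rank_one:
  fixes C :: "complex^'n^'n"
  assumes "psd C"
  obtains v where "psd (C - rank_one v)" "\<And>j. (C - rank_one v)$p$j = 0"
    "\<And>i. C$i$p = 0 \<Longrightarrow> v$i = 0"
proof (cases "C$p$p = 0")
  case True
  then show ?thesis
    using that[of 0] assms psd_diag_zero_imp_row_zero[OF assms] by simp
next
  case False
  have herm: "hermitian C" using assms by (simp add: psd_def)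
  define d where "d = Re (C$p$p)"
  have Cpp: "C$p$p = of_real d"
    using psd_qform_real[OF assms, of "axis p 1"] by (simp add: qform_axis d_def)
  have "d > 0"
    using psd_qform_nonneg[OF assms, of "axis p 1"] False by (simp add: qform_axis Cpp)
  define s where "s = sqrt d"
  have s: "s * s = d" using \<open>d > 0\<close> by (simp add: s_def)
  then have s2: "(of_real s)\<^sup>2 = (of_real d :: complex)"
    by (metis of_real_mult power2_eq_square)
  define v where "v = (\<chi> k. C$k$p / of_real s)"
  show ?thesis
  proof (rule that[of v])
    fix j
    have "(C - rank_one v)$p$j = C$p$j - C$p$p * C$p$j / of_real (s * s)"
      by (simp add: rank_one_def v_def hermitian_cnj[OF herm])
    then show "(C - rank_one v)$p$j = 0"
      using \<open>d > 0\<close> by (simp add: s Cpp)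
  next
    show "C$i$p = 0 \<Longrightarrow> v$i = 0" for i by (simp add: v_def)
  next
    have "0 \<le> Re (qform (C - rank_one v) x)" for x
    proof -
      define u where "u = (\<Sum>j\<in>UNIV. C$p$j * x$j)"
      have "(\<Sum>i\<in>UNIV. cnj (v$i) * x$i) = u / of_real s"
        by (simp add: v_def u_def hermitian_cnj[OF herm] sum_divide_distrib)
      then have "qform (C - rank_one v) x = qform C x - of_real ((cmod u)\<^sup>2) / of_real d"
        by (simp add: qform_diff qform_rank_one norm_divide power_divide s2)
      also have "\<dots> = qform C x - u * cnj u / of_real d"
        by (simp only: complex_norm_square)
      also have "\<dots> = qform C (x + axis p (- u / of_real d))"
        unfolding qform_add_axis[OF herm] u_def[symmetric] Cpp
        using \<open>d > 0\<close> by (simp add: field_simps)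
      finally show ?thesis
        using psd_qform_nonneg[OF assms] by simp
    qed
    then show "psd (C - rank_one v)"
      using assms psd_rank_one[of v] unfolding psd_def
      by (simp add: hermitian_diff qform_diff psd_qform_real)
  qed
qed

lemma psd_rank_one_decomposition_on:
  fixes C :: "complex^'n^'n"
  assumes "finite S" "psd C" "\<And>i j. i \<notin> S \<Longrightarrow> C$i$j = 0"
  shows "\<exists>w. C = (\<Sum>r\<in>S. rank_one (w r))"
  using assms
proof (induction S arbitrary: C rule: finite_induct)
  case empty
  then show ?case by (simp add: vec_eq_iff)
next
  case (insert p S)
  obtain v where psd': "psd (C - rank_one v)" and row: "\<And>j. (C - rank_one v)$p$j = 0"
    and col: "\<And>i. C$i$p = 0 \<Longrightarrow> v$i = 0"
    using psd_clear_row_rank_one[OF insert.prems(1)] by blast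
  have "(C - rank_one v)$i$j = 0" if "i \<notin> S" for i j
  proof (cases "i = p")
    case False
    with that insert.prems(2) show ?thesis by (simp add: rank_one_def col)
  qed (use row in simp)
  then obtain w where "C - rank_one v = (\<Sum>r\<in>S. rank_one (w r))"
    using insert.IH[OF psd'] by blast
  moreover have "(\<Sum>r\<in>S. rank_one ((w(p := v)) r)) = (\<Sum>r\<in>S. rank_one (w r))"
    using insert.hyps by (intro sum.cong) auto
  ultimately have "C = (\<Sum>r\<in>insert p S. rank_one ((w(p := v)) r))"
    using insert.hyps by (simp add: algebra_simps)
  then show ?case by blast
qed

lemma psd_rank_one_decomposition:
  fixes C :: "complex^'n^'n"
  assumes "psd C"
  obtains w :: "'n \<Rightarrow> complex^'n" where "C = (\<Sum>r\<in>UNIV. rank_one (w r))"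
  using psd_rank_one_decomposition_on[of UNIV C] assms that by auto

lemma sum_UNIV_prod:
  "(\<Sum>p\<in>(UNIV :: ('a::finite \<times> 'b::finite) set). f p) = (\<Sum>i\<in>UNIV. \<Sum>k\<in>UNIV. f (i, k))"
  by (simp add: sum.cartesian_product)

lemma hermitian_kron: "hermitian A \<Longrightarrow> hermitian B \<Longrightarrow> hermitian (kron A B)"
  by (simp add: hermitian_iff_cnj kron_def)

lemma kron_sum_right: "kron A (\<Sum>r\<in>S. B r) = (\<Sum>r\<in>S. kron A (B r))"
  by (simp add: kron_def vec_eq_iff sum_component sum_distrib_left)

lemma qform_kron_rank_one:
  "qform (kron A (rank_one v)) z = qform A (\<chi> i. \<Sum>l\<in>UNIV. cnj (v$l) * z$(i, l))"
proof -
  let ?t = "\<lambda>i j k l. v$k * cnj (z$(i, k)) * A$i$j * (cnj (v$l) * z$(j, l))"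
  have "qform (kron A (rank_one v)) z = (\<Sum>i\<in>UNIV. \<Sum>k\<in>UNIV. \<Sum>j\<in>UNIV. \<Sum>l\<in>UNIV. ?t i j k l)"
    unfolding qform_def kron_def rank_one_def sum_UNIV_prod by (simp add: mult_ac)
  also have "\<dots> = (\<Sum>i\<in>UNIV. \<Sum>j\<in>UNIV. \<Sum>k\<in>UNIV. \<Sum>l\<in>UNIV. ?t i j k l)"
    by (rule sum.cong[OF refl], rule sum.swap)
  also have "\<dots> = qform A (\<chi> i. \<Sum>l\<in>UNIV. cnj (v$l) * z$(i, l))"
  proof -
    have "cnj (\<Sum>k\<in>UNIV. cnj (v$k) * z$(i, k)) * A$i$j * (\<Sum>l\<in>UNIV. cnj (v$l) * z$(j, l))
        = (\<Sum>k\<in>UNIV. \<Sum>l\<in>UNIV. ?t i j k l)" for i j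
    proof -
      have "cnj (\<Sum>k\<in>UNIV. cnj (v$k) * z$(i, k)) * A$i$j
          = (\<Sum>k\<in>UNIV. v$k * cnj (z$(i, k)) * A$i$j)"
        by (simp add: sum_distrib_right)
      then show ?thesis by (simp only: sum_product)
    qed
    then show ?thesis unfolding qform_def vec_lambda_beta by simp
  qed
  finally show ?thesis .
qed

lemma psd_kron:
  fixes A :: "complex^'n^'n" and B :: "complex^'m^'m"
  assumes "psd A" "psd B"
  shows "psd (kron A B)"
proof -
  obtain w :: "'m \<Rightarrow> complex^'m" where B: "B = (\<Sum>r\<in>UNIV. rank_one (w r))"
    using psd_rank_one_decomposition[OF assms(2)] .
  have q: "qform (kron A B) z
      = (\<Sum>r\<in>UNIV. qform A (\<chi> i. \<Sum>l\<in>UNIV. cnj (w r $ l) * z$(i, l)))" for z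
    unfolding B kron_sum_right qform_sum qform_kron_rank_one ..
  have "hermitian (kron A B)"
    using assms by (simp add: psd_def hermitian_kron)
  with assms(1) show ?thesis
    unfolding psd_def q by (simp add: sum_nonneg)
qed

definition kron_vec :: "complex^'n \<Rightarrow> complex^'m \<Rightarrow> complex^('n \<times> 'm)" where
  "kron_vec x y = (\<chi> p. x$fst p * y$snd p)"

lemma qform_kron_kron_vec: "qform (kron A B) (kron_vec x y) = qform A x * qform B y"
proof -
  have "qform A x * qform B y = (\<Sum>i\<in>UNIV. \<Sum>k\<in>UNIV. \<Sum>j\<in>UNIV. \<Sum>l\<in>UNIV.
      (cnj (x$i) * A$i$j * x$j) * (cnj (y$k) * B$k$l * y$l))"
    unfolding qform_def sum_product ..
  also have "\<dots> = qform (kron A B) (kron_vec x y)"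
    unfolding qform_def kron_def kron_vec_def sum_UNIV_prod by (simp add: mult_ac)
  finally show ?thesis by simp
qed

lemma kron_ones_mat: "kron ones_mat ones_mat = ones_mat"
  by (simp add: kron_def ones_mat_def vec_eq_iff)

lemma ones_mat_eq_rank_one: "ones_mat = rank_one (\<chi> i. 1)"
  by (simp add: ones_mat_def rank_one_def)

lemma psd_ones_mat: "psd ones_mat"
  by (simp add: ones_mat_eq_rank_one psd_rank_one)

lemma qform_ones_mat: "qform ones_mat x = of_real ((cmod (\<Sum>i\<in>UNIV. x$i))\<^sup>2)"
  by (simp add: ones_mat_eq_rank_one qform_rank_one)

lemma Re_qform_ones_mat_pos: "0 < Re (qform ones_mat (\<chi> i. 1 :: complex^'n))"
  by (simp add: qform_ones_mat)

lemma scaleR_ones_mat_nth: "(t *\<^sub>R ones_mat :: complex^'n^'n)$i$j = of_real t"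
  unfolding vector_scaleR_component ones_mat_def by (simp add: scaleR_conv_of_real)

lemma kron_minus_scaled_ones_mat:
  fixes A :: "complex^'n^'n" and B :: "complex^'m^'m"
  shows "kron A B - (a * b) *\<^sub>R ones_mat
    = kron (A - a *\<^sub>R ones_mat) B + a *\<^sub>R kron ones_mat (B - b *\<^sub>R ones_mat)"
  unfolding vec_eq_iff kron_def vector_add_component vector_minus_component vector_scaleR_component
    scaleR_ones_mat_nth
  by (simp add: ones_mat_def scaleR_conv_of_real algebra_simps)

lemma psd_minus_ones_mat_iff:
  assumes "psd C"
  shows "psd (C - t *\<^sub>R ones_mat) \<longleftrightarrow> (\<forall>x. t * Re (qform ones_mat x) \<le> Re (qform C x))"
proof -
  have "hermitian (C - t *\<^sub>R ones_mat)"
    using assms psd_ones_mat unfolding psd_def by (blast intro: hermitian_diff hermitian_scaleR)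
  moreover have "Im (qform (C - t *\<^sub>R ones_mat) x) = 0" for x
    using assms by (simp add: qform_diff qform_scaleR psd_Im_qform psd_ones_mat)
  ultimately show ?thesis
    by (simp add: psd_def qform_diff qform_scaleR)
qed

lemma Re_qform_kron_kron_vec:
  assumes "psd A" "psd B"
  shows "Re (qform (kron A B) (kron_vec x y)) = Re (qform A x) * Re (qform B y)"
  using assms by (simp add: qform_kron_kron_vec psd_Im_qform)

lemma min_index_greatest:
  fixes C :: "complex^'n^'n"
  assumes "psd (C - t *\<^sub>R ones_mat)" "0 \<le> t"
  shows "t \<le> min_index C"
  unfolding min_index_def
proof (rule cSup_upper)
  show "t \<in> {t. 0 \<le> t \<and> psd (C - t *\<^sub>R ones_mat)}" using assms by simp
  let ?e = "\<chi> i. 1 :: complex^'n"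
  have "s \<le> Re (qform C ?e) / Re (qform ones_mat ?e)" if "psd (C - s *\<^sub>R ones_mat)" for s
    using psd_qform_nonneg[OF that, of ?e] Re_qform_ones_mat_pos[where 'n='n]
    by (simp add: qform_diff qform_scaleR pos_le_divide_eq)
  then show "bdd_above {t. 0 \<le> t \<and> psd (C - t *\<^sub>R ones_mat)}"
    by (metis (mono_tags, lifting) bdd_aboveI mem_Collect_eq)
qed

lemma min_index_nonneg: "psd C \<Longrightarrow> 0 \<le> min_index C"
  by (rule min_index_greatest) simp_all

lemma psd_minus_min_index:
  assumes "psd C"
  shows "psd (C - min_index C *\<^sub>R ones_mat)"
  unfolding psd_minus_ones_mat_iff[OF assms]
proof
  fix x
  show "min_index C * Re (qform ones_mat x) \<le> Re (qform C x)"
  proof (cases "Re (qform ones_mat x) = 0")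
    case True
    then show ?thesis using psd_qform_nonneg[OF assms] by simp
  next
    case False
    then have pos: "0 < Re (qform ones_mat x)"
      using psd_qform_nonneg[OF psd_ones_mat, of x] by simp
    have "min_index C \<le> Re (qform C x) / Re (qform ones_mat x)"
      unfolding min_index_def
    proof (rule cSup_least)
      show "{t. 0 \<le> t \<and> psd (C - t *\<^sub>R ones_mat)} \<noteq> {}"
        using assms by auto
    next
      fix t assume "t \<in> {t. 0 \<le> t \<and> psd (C - t *\<^sub>R ones_mat)}"
      then show "t \<le> Re (qform C x) / Re (qform ones_mat x)"
        using pos by (simp add: psd_minus_ones_mat_iff[OF assms] pos_le_divide_eq)
    qed
    then show ?thesis using pos by (simp add: pos_le_divide_eq)
  qed
qed

lemma le_mult_min_index:
  fixes C :: "complex^'n^'n"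
  assumes "psd C" "0 \<le> d" "\<And>x. c * Re (qform ones_mat x) \<le> d * Re (qform C x)"
  shows "c \<le> d * min_index C"
proof (cases "c \<le> 0")
  case True
  then show ?thesis
    using assms(2) min_index_nonneg[OF assms(1)] by (meson mult_nonneg_nonneg order_trans)
next
  case False
  let ?e = "\<chi> i. 1 :: complex^'n"
  have "d \<noteq> 0"
    using assms(3)[of ?e] False Re_qform_ones_mat_pos[where 'n='n] by (auto simp: mult_le_0_iff)
  with assms(2) have "d > 0" by simp
  have "psd (C - (c / d) *\<^sub>R ones_mat)"
    unfolding psd_minus_ones_mat_iff[OF assms(1)]
    using assms(3) \<open>d > 0\<close> by (simp add: divide_le_eq mult.commute)
  then have "c / d \<le> min_index C"
    using False \<open>d > 0\<close> by (intro min_index_greatest) simp_all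
  then show ?thesis using \<open>d > 0\<close> by (simp add: divide_le_eq mult.commute)
qed

theorem corollary2p3:
  fixes A :: "complex^'n^'n" and B :: "complex^'m^'m"
  assumes "psd A" and "psd B"
  shows "min_index (kron A B) = min_index A * min_index B"
proof -
  let ?a = "min_index A" and ?b = "min_index B" and ?c = "min_index (kron A B)"
  have "psd (kron (A - ?a *\<^sub>R ones_mat) B + ?a *\<^sub>R kron ones_mat (B - ?b *\<^sub>R ones_mat))"
    using assms
    by (simp add: psd_add psd_scaleR psd_kron psd_ones_mat psd_minus_min_index min_index_nonneg)
  then have ge: "?a * ?b \<le> ?c"
    using assms by (intro min_index_greatest) (simp_all add: kron_minus_scaled_ones_mat min_index_nonneg)
  have K: "psd (kron A B)" using psd_kron[OF assms] .
  have bound: "?c * Re (qform ones_mat z) \<le> Re (qform (kron A B) z)" for z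
    using psd_minus_min_index[OF K] unfolding psd_minus_ones_mat_iff[OF K] by blast
  have product:
    "?c * Re (qform ones_mat x) * Re (qform ones_mat y) \<le> Re (qform A x) * Re (qform B y)" for x y
    using bound[of "kron_vec x y"]
    by (simp add: Re_qform_kron_kron_vec assms psd_ones_mat mult.assoc flip: kron_ones_mat)
  have "?c * Re (qform ones_mat y) \<le> ?a * Re (qform B y)" for y
    using le_mult_min_index[OF assms(1) psd_qform_nonneg[OF assms(2)]] product
    by (simp add: mult_ac)
  then have "?c \<le> ?a * ?b"
    by (rule le_mult_min_index[OF assms(2) min_index_nonneg[OF assms(1)]])
  with ge show ?thesis by simp
qed

end
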